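(* Let $X$ be a complex Banach space, $\mathcal{F}$ an algebra with unit, $\mathcal{E}\subseteq\mathcal{F}$ a subalgebra and $\Phi:\mathcal{E}\to\mathcal{L}(X)$ a non-degenerate algebra representation. Then the set $$\mathrm{anc}(\mathcal{E},\mathcal{F},\Phi):=\{f\in\mathcal{F}: \text{for all } e\in\mathcal{E},\ [ef]_{\mathcal{E}} \text{ is a } \Phi\text{-anchor set}\}$$ is a unital subalgebra of $\mathcal{F}$ that contains $\mathcal{E}$ and is anchored in $\mathcal{E}$. Moreover, $\mathrm{anc}(\mathcal{E},\mathcal{F},\Phi)$ contains every unital subalgebra of $\mathcal{F}$ that contains $\mathcal{E}$ and is anchored in $\mathcal{E}$.
   Context: $\mathcal{F}$ need not be commutative; $\mathcal{E}$ need not be unital. An algebra representation is an algebra homomorphism into $\mathcal{L}(X)$. For $f\in\mathcal{F}$, $[f]_{\mathcal{E}}=\{e\in\mathcal{E}:ef\in\mathcal{E}\}$. A subset $\mathcal{M}\subseteq\mathcal{E}$ is a $\Phi$-anchor set if $\mathcal{M}\neq\emptyset$ and $\bigcap_{e\in\mathcal{M}}\ker\Phi(e)=\{0\}$. $f$ is anchored in $\mathcal{E}$ if $[f]_{\mathcal{E}}$ is a $\Phi$-anchor set; a subset of $\mathcal{F}$ is anchored in $\mathcal{E}$ if all its elements are. $\Phi$ is non-degenerate if $\mathcal{E}$ itself is a $\Phi$-anchor set. *)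

theory Defs
  imports "HOL-Analysis.Analysis"
begin

text \<open>Complex scalar structure on a (real) Banach space: a complex vector space
 structure compatible with the real one and with the norm.\<close>
definition complex_banach_scaling :: "(complex \<Rightarrow> 'x::banach \<Rightarrow> 'x) \<Rightarrow> bool" where
  "complex_banach_scaling scX \<longleftrightarrow>
     vector_space scX \<and>
     (\<forall>r x. scX (complex_of_real r) x = r *\<^sub>R x) \<and>
     (\<forall>c x. norm (scX c x) = cmod c * norm x)"

definition complex_algebra_scaling :: "(complex \<Rightarrow> 'f::{ring,monoid_mult} \<Rightarrow> 'f) \<Rightarrow> bool" where
  "complex_algebra_scaling scF \<longleftrightarrow>
     vector_space scF \<and>
     (\<forall>c a b. scF c (a * b) = scF c a * b \<and> scF c (a * b) = a * scF c b)"

definition bounded_operator :: "(complex \<Rightarrow> 'x::banach \<Rightarrow> 'x) \<Rightarrow> ('x \<Rightarrow> 'x) \<Rightarrow> bool" where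
  "bounded_operator scX T \<longleftrightarrow> bounded_linear T \<and> Vector_Spaces.linear scX scX T"

definition subalgebra :: "(complex \<Rightarrow> 'f::{ring,monoid_mult} \<Rightarrow> 'f) \<Rightarrow> 'f set \<Rightarrow> bool" where
  "subalgebra scF A \<longleftrightarrow> 0 \<in> A \<and> (\<forall>a\<in>A. \<forall>b\<in>A. a + b \<in> A \<and> a * b \<in> A) \<and>
     (\<forall>c. \<forall>a\<in>A. scF c a \<in> A)"

definition unital_subalgebra :: "(complex \<Rightarrow> 'f::{ring,monoid_mult} \<Rightarrow> 'f) \<Rightarrow> 'f set \<Rightarrow> bool" where
  "unital_subalgebra scF A \<longleftrightarrow> subalgebra scF A \<and> 1 \<in> A"

text \<open>Algebra representation of the subalgebra E (values of Phi outside E are irrelevant).\<close>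
definition algebra_rep ::
  "(complex \<Rightarrow> 'f::{ring,monoid_mult} \<Rightarrow> 'f) \<Rightarrow> (complex \<Rightarrow> 'x::banach \<Rightarrow> 'x) \<Rightarrow> 'f set \<Rightarrow> ('f \<Rightarrow> 'x \<Rightarrow> 'x) \<Rightarrow> bool" where
  "algebra_rep scF scX E \<Phi> \<longleftrightarrow>
     (\<forall>e\<in>E. bounded_operator scX (\<Phi> e)) \<and>
     (\<forall>a\<in>E. \<forall>b\<in>E. \<Phi> (a + b) = (\<lambda>x. \<Phi> a x + \<Phi> b x)) \<and>
     (\<forall>c. \<forall>a\<in>E. \<Phi> (scF c a) = (\<lambda>x. scX c (\<Phi> a x))) \<and>
     (\<forall>a\<in>E. \<forall>b\<in>E. \<Phi> (a * b) = \<Phi> a \<circ> \<Phi> b)"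

definition bracket :: "'f set \<Rightarrow> 'f::{ring,monoid_mult} \<Rightarrow> 'f set" where
  "bracket E f = {e \<in> E. e * f \<in> E}"

definition anchor_set :: "('f \<Rightarrow> 'x::banach \<Rightarrow> 'x) \<Rightarrow> 'f set \<Rightarrow> 'f set \<Rightarrow> bool" where
  "anchor_set \<Phi> E M \<longleftrightarrow> M \<noteq> {} \<and> M \<subseteq> E \<and> (\<Inter>e\<in>M. {x. \<Phi> e x = 0}) = {0}"

definition anchored :: "('f \<Rightarrow> 'x::banach \<Rightarrow> 'x) \<Rightarrow> 'f set \<Rightarrow> 'f::{ring,monoid_mult} \<Rightarrow> bool" where
  "anchored \<Phi> E f \<longleftrightarrow> anchor_set \<Phi> E (bracket E f)"

definition anchored_set :: "('f \<Rightarrow> 'x::banach \<Rightarrow> 'x) \<Rightarrow> 'f set \<Rightarrow> 'f::{ring,monoid_mult} set \<Rightarrow> bool" where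
  "anchored_set \<Phi> E A \<longleftrightarrow> (\<forall>f\<in>A. anchored \<Phi> E f)"

definition non_degenerate :: "('f \<Rightarrow> 'x::banach \<Rightarrow> 'x) \<Rightarrow> 'f set \<Rightarrow> bool" where
  "non_degenerate \<Phi> E \<longleftrightarrow> anchor_set \<Phi> E E"

definition anc :: "'f::{ring,monoid_mult} set \<Rightarrow> ('f \<Rightarrow> 'x::banach \<Rightarrow> 'x) \<Rightarrow> 'f set" where
  "anc E \<Phi> = {f. \<forall>e\<in>E. anchor_set \<Phi> E (bracket E (e * f))}"

end

theory Submission
  imports Defs
begin

text \<open>Everything rests on a transitivity property of anchor sets: if \<open>M\<close> is an anchor
  set and every \<open>a \<in> M\<close> comes with an anchor set \<open>N a\<close>, then the products \<open>b * a\<close>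
  with \<open>b \<in> N a\<close> again form an anchor set, because \<open>\<Phi> (b * a) = \<Phi> b \<circ> \<Phi> a\<close>.
  Closure of \<open>anc E \<Phi>\<close> under sums and products, and the anchoredness of its elements,
  are instances of this; nonzero scalars do not change brackets, and maximality holds
  because a unital subalgebra containing \<open>E\<close> contains every \<open>e * f\<close>.\<close>

locale anchoring_rep =
  fixes E :: "'f::{ring,monoid_mult} set" and \<Phi> :: "'f \<Rightarrow> 'x::banach \<Rightarrow> 'x"
  assumes add_closed: "a \<in> E \<Longrightarrow> b \<in> E \<Longrightarrow> a + b \<in> E"
    and mult_closed: "a \<in> E \<Longrightarrow> b \<in> E \<Longrightarrow> a * b \<in> E"
    and rep_mult: "a \<in> E \<Longrightarrow> b \<in> E \<Longrightarrow> \<Phi> (a * b) = \<Phi> a \<circ> \<Phi> b"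
    and rep_zero: "a \<in> E \<Longrightarrow> \<Phi> a 0 = 0"
    and anchor_set_E: "anchor_set \<Phi> E E"
begin

lemma anchor_set_of_products:
  assumes M: "anchor_set \<Phi> E M"
    and N: "\<And>a. a \<in> M \<Longrightarrow> anchor_set \<Phi> E (N a)"
    and NT: "\<And>a b. a \<in> M \<Longrightarrow> b \<in> N a \<Longrightarrow> b * a \<in> T"
    and TE: "T \<subseteq> E"
  shows "anchor_set \<Phi> E T"
proof -
  have ME: "M \<subseteq> E" and M_kernel: "(\<Inter>e\<in>M. {x. \<Phi> e x = 0}) = {0}"
    using M by (auto simp: anchor_set_def)
  obtain a where a: "a \<in> M" using M by (auto simp: anchor_set_def)
  obtain b where "b \<in> N a" using N[OF a] by (auto simp: anchor_set_def)
  then have "T \<noteq> {}" using NT a by blast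
  moreover have "x = 0" if x: "x \<in> (\<Inter>h\<in>T. {x. \<Phi> h x = 0})" for x
  proof -
    have "\<Phi> a x = 0" if a: "a \<in> M" for a
    proof -
      have NE: "N a \<subseteq> E" and N_kernel: "(\<Inter>e\<in>N a. {x. \<Phi> e x = 0}) = {0}"
        using N[OF a] by (auto simp: anchor_set_def)
      have "\<Phi> b (\<Phi> a x) = 0" if b: "b \<in> N a" for b
      proof -
        have "\<Phi> (b * a) x = 0" using x NT[OF a b] by blast
        moreover have "\<Phi> (b * a) = \<Phi> b \<circ> \<Phi> a" using rep_mult NE ME a b by blast
        ultimately show ?thesis by simp
      qed
      then show ?thesis using N_kernel by blast
    qed
    then show ?thesis using M_kernel by blast
  qed
  moreover have "0 \<in> (\<Inter>h\<in>T. {x. \<Phi> h x = 0})" using rep_zero TE by blast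
  ultimately show ?thesis using TE unfolding anchor_set_def by blast
qed

lemma bracket_of_mem: "g \<in> E \<Longrightarrow> bracket E g = E"
  using mult_closed by (auto simp: bracket_def)

lemma ancI: "(\<And>e. e \<in> E \<Longrightarrow> anchor_set \<Phi> E (bracket E (e * f))) \<Longrightarrow> f \<in> anc E \<Phi>"
  by (simp add: anc_def)

lemma ancD: "f \<in> anc E \<Phi> \<Longrightarrow> e \<in> E \<Longrightarrow> anchor_set \<Phi> E (bracket E (e * f))"
  by (simp add: anc_def)

lemma subset_anc: "E \<subseteq> anc E \<Phi>"
  using bracket_of_mem mult_closed anchor_set_E by (auto intro!: ancI)

lemma one_mem_anc: "1 \<in> anc E \<Phi>"
  using bracket_of_mem anchor_set_E by (auto intro!: ancI)

lemma anc_add_closed: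
  assumes f: "f \<in> anc E \<Phi>" and g: "g \<in> anc E \<Phi>"
  shows "f + g \<in> anc E \<Phi>"
proof (rule ancI)
  fix e assume e: "e \<in> E"
  show "anchor_set \<Phi> E (bracket E (e * (f + g)))"
  proof (rule anchor_set_of_products[OF ancD[OF f e], where N = "\<lambda>a. bracket E (a * e * g)"])
    fix a assume "a \<in> bracket E (e * f)"
    then show "anchor_set \<Phi> E (bracket E (a * e * g))"
      using ancD[OF g] mult_closed e by (auto simp: bracket_def)
  next
    fix a b assume a: "a \<in> bracket E (e * f)" and b: "b \<in> bracket E (a * e * g)"
    have "b * a * (e * (f + g)) = b * (a * (e * f)) + b * (a * e * g)"
      by (simp add: distrib_left mult.assoc)
    then show "b * a \<in> bracket E (e * (f + g))"
      using a b mult_closed add_closed by (auto simp: bracket_def)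
  qed (auto simp: bracket_def)
qed

lemma anc_mult_closed:
  assumes f: "f \<in> anc E \<Phi>" and g: "g \<in> anc E \<Phi>"
  shows "f * g \<in> anc E \<Phi>"
proof (rule ancI)
  fix e assume e: "e \<in> E"
  show "anchor_set \<Phi> E (bracket E (e * (f * g)))"
  proof (rule anchor_set_of_products[OF ancD[OF f e], where N = "\<lambda>a. bracket E (a * (e * f) * g)"])
    fix a assume "a \<in> bracket E (e * f)"
    then show "anchor_set \<Phi> E (bracket E (a * (e * f) * g))"
      using ancD[OF g] by (auto simp: bracket_def)
  next
    fix a b assume a: "a \<in> bracket E (e * f)" and b: "b \<in> bracket E (a * (e * f) * g)"
    have "b * a * (e * (f * g)) = b * (a * (e * f) * g)"
      by (simp add: mult.assoc)
    then show "b * a \<in> bracket E (e * (f * g))"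
      using a b mult_closed by (auto simp: bracket_def)
  qed (auto simp: bracket_def)
qed

lemma anchored_set_anc: "anchored_set \<Phi> E (anc E \<Phi>)"
  unfolding anchored_set_def anchored_def
proof
  fix f assume f: "f \<in> anc E \<Phi>"
  show "anchor_set \<Phi> E (bracket E f)"
  proof (rule anchor_set_of_products[OF anchor_set_E, where N = "\<lambda>a. bracket E (a * f)"])
    fix a assume "a \<in> E"
    then show "anchor_set \<Phi> E (bracket E (a * f))" using ancD[OF f] by simp
  next
    fix a b assume "a \<in> E" "b \<in> bracket E (a * f)"
    then show "b * a \<in> bracket E f" using mult_closed by (auto simp: bracket_def mult.assoc)
  qed (auto simp: bracket_def)
qed

context
  fixes scF :: "complex \<Rightarrow> 'f \<Rightarrow> 'f"
  assumes vs: "vector_space scF"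
    and scale_right: "\<And>c a b. scF c (a * b) = a * scF c b"
    and scale_closed: "\<And>c a. a \<in> E \<Longrightarrow> scF c a \<in> E"
begin

interpretation F: vector_space scF by (fact vs)

lemma bracket_scale:
  assumes "c \<noteq> 0"
  shows "bracket E (scF c g) = bracket E g"
proof -
  have "h * scF c g \<in> E \<longleftrightarrow> h * g \<in> E" for h
  proof
    assume "h * scF c g \<in> E"
    then have "scF (inverse c) (h * scF c g) \<in> E" using scale_closed by simp
    then show "h * g \<in> E" using assms by (simp flip: scale_right)
  qed (metis scale_right scale_closed)
  then show ?thesis by (auto simp: bracket_def)
qed

lemma anc_scale_closed:
  assumes f: "f \<in> anc E \<Phi>"
  shows "scF c f \<in> anc E \<Phi>"
proof (cases "c = 0")
  case True
  obtain e where "e \<in> E" using anchor_set_E by (auto simp: anchor_set_def)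
  then have "0 \<in> E" using scale_closed[of e 0] by simp
  then show ?thesis using True subset_anc by auto
next
  case False
  show ?thesis
  proof (rule ancI)
    fix e assume "e \<in> E"
    then show "anchor_set \<Phi> E (bracket E (e * scF c f))"
      using ancD[OF f] bracket_scale[OF False] by (simp flip: scale_right)
  qed
qed

end

end

lemma subset_anc_if_anchored:
  assumes "\<And>e f. e \<in> E \<Longrightarrow> f \<in> A \<Longrightarrow> e * f \<in> A" and "anchored_set \<Phi> E A"
  shows "A \<subseteq> anc E \<Phi>"
  using assms by (auto simp: anc_def anchored_set_def anchored_def)

theorem theorem6p4:
  fixes scX :: "complex \<Rightarrow> 'x::banach \<Rightarrow> 'x"
    and scF :: "complex \<Rightarrow> 'f::{ring,monoid_mult} \<Rightarrow> 'f"
    and E :: "'f set"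
    and \<Phi> :: "'f \<Rightarrow> 'x \<Rightarrow> 'x"
  assumes "complex_banach_scaling scX"
    and "complex_algebra_scaling scF"
    and "subalgebra scF E"
    and "algebra_rep scF scX E \<Phi>"
    and "non_degenerate \<Phi> E"
  shows "unital_subalgebra scF (anc E \<Phi>) \<and> E \<subseteq> anc E \<Phi> \<and> anchored_set \<Phi> E (anc E \<Phi>) \<and>
         (\<forall>A. unital_subalgebra scF A \<and> E \<subseteq> A \<and> anchored_set \<Phi> E A \<longrightarrow> A \<subseteq> anc E \<Phi>)"
proof -
  have "bounded_linear (\<Phi> e)" if "e \<in> E" for e
    using assms(4) that by (auto simp: algebra_rep_def bounded_operator_def)
  then interpret anchoring_rep E \<Phi>
    using assms(3-5) by unfold_locales
      (auto simp: subalgebra_def algebra_rep_def non_degenerate_def linear_simps)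
  have scF: "vector_space scF" "\<And>c a b. scF c (a * b) = a * scF c b"
    using assms(2) unfolding complex_algebra_scaling_def by metis+
  have "\<And>c a. a \<in> E \<Longrightarrow> scF c a \<in> E" using assms(3) by (simp add: subalgebra_def)
  note anc_scale = anc_scale_closed[OF scF this]
  have "unital_subalgebra scF (anc E \<Phi>)"
    using subset_anc assms(3) one_mem_anc anc_add_closed anc_mult_closed anc_scale
    by (auto simp: unital_subalgebra_def subalgebra_def)
  moreover have "A \<subseteq> anc E \<Phi>"
    if "unital_subalgebra scF A" "E \<subseteq> A" "anchored_set \<Phi> E A" for A
    using that by (intro subset_anc_if_anchored) (auto simp: unital_subalgebra_def subalgebra_def)
  ultimately show ?thesis using subset_anc anchored_set_anc by blast
qed

end
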